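(* Let $f\colon\prod_{\mathbb{N}}\mathbb{Z}\to\prod_{\mathbb{N}}\mathbb{Z}$ be a morphism of light condensed abelian groups. Then the image of $f$ is isomorphic to $\prod_I\mathbb{Z}$ for some countable set $I$ (possibly finite).
   Context: $\prod_{\mathbb{N}}\mathbb{Z}$ denotes the light condensed abelian group associated to the product topological group (sequences of integers with the product topology); light condensed abelian groups are abelian sheaves on metrizable profinite sets for finite jointly surjective covers. The image is taken in the abelian category of light condensed abelian groups. *)

theory Defs
  imports "HOL-Analysis.Analysis"
begin

text \<open>Model of the site of light profinite sets: every light (metrizable) profinite set
is homeomorphic to a closed subset of the Cantor space (nat => bool) with the product
topology, so we use closed subsets of the Cantor space with all continuous maps
between them as an equivalent small site. Covers are finite jointly surjective families.\<close>

type_synonym cantor = "nat \<Rightarrow> bool"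

definition light_profinite :: "cantor set \<Rightarrow> bool" where
  "light_profinite S \<longleftrightarrow> closed S"

definition cmap :: "cantor set \<Rightarrow> cantor set \<Rightarrow> (cantor \<Rightarrow> cantor) set" where
  "cmap T S = {g. continuous_on T g \<and> g ` T \<subseteq> S}"

text \<open>Sections over S of the light condensed abelian group associated to the product
topological group prod_N Z: continuous maps S -> (nat => int) (product topology,
int discrete), made extensional outside S.\<close>
definition sec :: "cantor set \<Rightarrow> (cantor \<Rightarrow> nat \<Rightarrow> int) set" where
  "sec S = {u. continuous_on S u \<and> (\<forall>x. x \<notin> S \<longrightarrow> u x = undefined)}"

text \<open>Sections over S of prod_I Z (I a subset of nat, i.e. a countable set), realised
inside prod_N Z as sequences vanishing outside I.\<close>
definition secI :: "nat set \<Rightarrow> cantor set \<Rightarrow> (cantor \<Rightarrow> nat \<Rightarrow> int) set" where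
  "secI I S = {u \<in> sec S. \<forall>x\<in>S. \<forall>i. i \<notin> I \<longrightarrow> u x i = 0}"

definition sadd :: "cantor set \<Rightarrow> (cantor \<Rightarrow> nat \<Rightarrow> int) \<Rightarrow> (cantor \<Rightarrow> nat \<Rightarrow> int) \<Rightarrow> (cantor \<Rightarrow> nat \<Rightarrow> int)" where
  "sadd S u v = (\<lambda>x. if x \<in> S then (\<lambda>i. u x i + v x i) else undefined)"

definition pull :: "cantor set \<Rightarrow> (cantor \<Rightarrow> cantor) \<Rightarrow> (cantor \<Rightarrow> nat \<Rightarrow> int) \<Rightarrow> (cantor \<Rightarrow> nat \<Rightarrow> int)" where
  "pull T g u = (\<lambda>x. if x \<in> T then u (g x) else undefined)"

definition condensed_endo :: "(cantor set \<Rightarrow> (cantor \<Rightarrow> nat \<Rightarrow> int) \<Rightarrow> (cantor \<Rightarrow> nat \<Rightarrow> int)) \<Rightarrow> bool" where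
  "condensed_endo f \<longleftrightarrow>
     (\<forall>S. light_profinite S \<longrightarrow>
        (\<forall>u\<in>sec S. f S u \<in> sec S) \<and>
        (\<forall>u\<in>sec S. \<forall>v\<in>sec S. f S (sadd S u v) = sadd S (f S u) (f S v))) \<and>
     (\<forall>S T g. light_profinite S \<longrightarrow> light_profinite T \<longrightarrow> g \<in> cmap T S \<longrightarrow>
        (\<forall>u\<in>sec S. f T (pull T g u) = pull T g (f S u)))"

text \<open>The image of f in the abelian category of light condensed abelian groups:
the sheafification of the presheaf image, i.e. the subsheaf of sections which,
after pullback to some finite jointly surjective cover, lie in the image.\<close>
definition cimage :: "(cantor set \<Rightarrow> (cantor \<Rightarrow> nat \<Rightarrow> int) \<Rightarrow> (cantor \<Rightarrow> nat \<Rightarrow> int)) \<Rightarrow> cantor set \<Rightarrow> (cantor \<Rightarrow> nat \<Rightarrow> int) set" where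
  "cimage f S = {s \<in> sec S. \<exists>(n::nat) Ts gs.
      (\<forall>j<n. light_profinite (Ts j) \<and> gs j \<in> cmap (Ts j) S) \<and>
      S \<subseteq> (\<Union>j<n. gs j ` Ts j) \<and>
      (\<forall>j<n. pull (Ts j) (gs j) s \<in> f (Ts j) ` sec (Ts j))}"

definition image_iso_prodZ :: "(cantor set \<Rightarrow> (cantor \<Rightarrow> nat \<Rightarrow> int) \<Rightarrow> (cantor \<Rightarrow> nat \<Rightarrow> int)) \<Rightarrow> nat set \<Rightarrow> (cantor set \<Rightarrow> (cantor \<Rightarrow> nat \<Rightarrow> int) \<Rightarrow> (cantor \<Rightarrow> nat \<Rightarrow> int)) \<Rightarrow> bool" where
  "image_iso_prodZ f I \<phi> \<longleftrightarrow>
     (\<forall>S. light_profinite S \<longrightarrow>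
        bij_betw (\<phi> S) (cimage f S) (secI I S) \<and>
        (\<forall>u\<in>cimage f S. \<forall>v\<in>cimage f S. \<phi> S (sadd S u v) = sadd S (\<phi> S u) (\<phi> S v))) \<and>
     (\<forall>S T g. light_profinite S \<longrightarrow> light_profinite T \<longrightarrow> g \<in> cmap T S \<longrightarrow>
        (\<forall>u\<in>cimage f S. \<phi> T (pull T g u) = pull T g (\<phi> S u)))"

end

theory Submission
  imports Defs
begin

text \<open>A morphism \<open>f\<close> is determined by its value \<open>f_pt\<close> on the point, a homomorphism
  \<open>\<int>\<^sup>\<nat> \<rightarrow> \<int>\<^sup>\<nat>\<close>; evaluating \<open>f\<close> on the convergent sequence \<open>\<nat> \<union> {\<infinity>}\<close> shows that every output
  coordinate depends on finitely many inputs, so \<open>f_pt\<close> is a row-finite integer matrix with kernel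
  \<open>Ker\<close>, and the image of \<open>f\<close> consists of the sections that are pointwise in \<open>\<int>\<^sup>\<nat>/Ker\<close>.
  The finitely supported forms \<open>Ann\<close> vanishing on \<open>Ker\<close> form a pure subgroup, and filtering by
  support shows that it has an echelon basis \<open>ann_basis\<close> which extends to a basis of all
  finitely supported forms; here the echelon structure of \<open>Ker\<close> itself is used to show that the
  saturation of \<open>supp_below m + Ann\<close> grows by at most one generator at each step.
  Then \<open>x \<mapsto> (pairing (ann_basis a) x)\<^sub>a\<close> identifies \<open>\<int>\<^sup>\<nat>/Ker\<close> with \<open>\<int>\<^sup>I\<close> for
  \<open>I = {a. ann_basis a \<noteq> 0}\<close>, continuously in both directions (the inverse is the dual
  basis, a row-finite matrix), and applying it pointwise gives the isomorphism of sheaves.\<close>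

section \<open>Finitely supported integer vectors\<close>

definition supp_below :: "nat \<Rightarrow> (nat \<Rightarrow> int) set" where
  "supp_below M = {u. \<forall>j\<ge>M. u j = 0}"

definition fin_supp :: "(nat \<Rightarrow> int) \<Rightarrow> bool" where
  "fin_supp u \<longleftrightarrow> (\<exists>M. u \<in> supp_below M)"

text \<open>The pairing of \<open>\<int>\<^bsup>(\<nat>)\<^esup>\<close> with \<open>\<int>\<^sup>\<nat>\<close>; for \<open>v\<close> of infinite support the sum is junk (\<open>0\<close>).\<close>

definition pairing :: "(nat \<Rightarrow> int) \<Rightarrow> (nat \<Rightarrow> int) \<Rightarrow> int" where
  "pairing v x = (\<Sum>j | v j \<noteq> 0. v j * x j)"

definition lin_closed :: "('a \<Rightarrow> int) set \<Rightarrow> bool" where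
  "lin_closed A \<longleftrightarrow> (\<lambda>_. 0) \<in> A \<and> (\<forall>u\<in>A. \<forall>v\<in>A. \<forall>c. (\<lambda>j. u j + c * v j) \<in> A)"

lemma lin_closedI:
  assumes "(\<lambda>_. 0) \<in> A" "\<And>u v c. u \<in> A \<Longrightarrow> v \<in> A \<Longrightarrow> (\<lambda>j. u j + c * v j) \<in> A"
  shows "lin_closed A"
  using assms by (simp add: lin_closed_def)

lemma lin_closed_zero: "lin_closed A \<Longrightarrow> (\<lambda>_. 0) \<in> A"
  by (simp add: lin_closed_def)

lemma lin_closed_add_smult: "lin_closed A \<Longrightarrow> u \<in> A \<Longrightarrow> v \<in> A \<Longrightarrow> (\<lambda>j. u j + c * v j) \<in> A"
  by (simp add: lin_closed_def)

lemma lin_closed_diff_smult: "lin_closed A \<Longrightarrow> u \<in> A \<Longrightarrow> v \<in> A \<Longrightarrow> (\<lambda>j. u j - c * v j) \<in> A"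
  using lin_closed_add_smult[of A u v "- c"] by simp

lemma lin_closed_comb:
  assumes "lin_closed A" "u \<in> A" "v \<in> A"
  shows "(\<lambda>j. a * u j + b * v j) \<in> A"
proof -
  have "(\<lambda>j. 0 + a * u j) \<in> A"
    using assms by (intro lin_closed_add_smult lin_closed_zero)
  then show ?thesis
    using lin_closed_add_smult[OF assms(1) _ assms(3), of "\<lambda>j. a * u j" b] by simp
qed

lemma lin_closed_sum:
  fixes M :: nat
  assumes "lin_closed A" "\<And>n. n < M \<Longrightarrow> g n \<in> A"
  shows "(\<lambda>j. \<Sum>n<M. b n * g n j) \<in> A"
  using assms(2)
proof (induction M)
  case 0
  then show ?case using lin_closed_zero[OF assms(1)] by simp
next
  case (Suc M)
  then have "(\<lambda>j. (\<Sum>n<M. b n * g n j) + b M * g M j) \<in> A"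
    by (intro lin_closed_add_smult[OF assms(1)]) auto
  then show ?case by simp
qed

lemma lin_closed_Int: "lin_closed A \<Longrightarrow> lin_closed B \<Longrightarrow> lin_closed (A \<inter> B)"
  by (simp add: lin_closed_def)

lemma lin_closed_supp_below: "lin_closed (supp_below M)"
  by (auto simp: lin_closed_def supp_below_def)

lemma supp_below_mono: "M \<le> M' \<Longrightarrow> supp_below M \<subseteq> supp_below M'"
  by (auto simp: supp_below_def)

lemma supp_below_subset_Suc: "supp_below m \<subseteq> supp_below (Suc m)"
  by (simp add: supp_below_mono)

lemma supp_below_0: "supp_below 0 = {\<lambda>_. 0}"
  by (auto simp: supp_below_def)

lemma supp_below_Suc_iff: "u \<in> supp_below (Suc m) \<Longrightarrow> u \<in> supp_below m \<longleftrightarrow> u m = 0"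
  by (auto simp: supp_below_def) (metis Suc_leI le_neq_implies_less)

lemma fin_supp_common_bound:
  assumes "fin_supp u" "fin_supp v"
  obtains M where "u \<in> supp_below M" "v \<in> supp_below M"
proof -
  obtain M1 M2 where "u \<in> supp_below M1" "v \<in> supp_below M2"
    using assms by (auto simp: fin_supp_def)
  then show ?thesis
    using that supp_below_mono[of M1 "max M1 M2"] supp_below_mono[of M2 "max M1 M2"] by auto
qed

lemma lin_closed_fin_supp: "lin_closed (Collect fin_supp)"
proof (rule lin_closedI)
  fix u v c
  assume "u \<in> Collect fin_supp" "v \<in> Collect fin_supp"
  then obtain M where "u \<in> supp_below M" "v \<in> supp_below M"
    by (auto elim: fin_supp_common_bound)
  then show "(\<lambda>j. u j + c * v j) \<in> Collect fin_supp"
    by (auto simp: fin_supp_def intro: lin_closed_add_smult[OF lin_closed_supp_below])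
qed (auto simp: fin_supp_def supp_below_def)

lemma pairing_supp_below: "v \<in> supp_below M \<Longrightarrow> pairing v x = (\<Sum>j<M. v j * x j)"
  unfolding pairing_def
  by (rule sum.mono_neutral_left) (auto simp: supp_below_def not_less[symmetric])

lemma pairing_add_smult_left:
  assumes "fin_supp u" "fin_supp v"
  shows "pairing (\<lambda>j. u j + c * v j) x = pairing u x + c * pairing v x"
proof -
  obtain M where "u \<in> supp_below M" "v \<in> supp_below M"
    using assms by (rule fin_supp_common_bound)
  moreover from this have "(\<lambda>j. u j + c * v j) \<in> supp_below M"
    by (rule lin_closed_add_smult[OF lin_closed_supp_below])
  ultimately show ?thesis
    by (simp add: pairing_supp_below sum.distrib sum_distrib_left algebra_simps)
qed

lemma pairing_add_smult_right: "pairing v (\<lambda>j. x j + c * y j) = pairing v x + c * pairing v y"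
  by (simp add: pairing_def sum.distrib sum_distrib_left algebra_simps)

lemma pairing_diff_right: "pairing v (\<lambda>j. x j - y j) = pairing v x - pairing v y"
  using pairing_add_smult_right[of v x "- 1" y] by simp

lemma pairing_zero_left [simp]: "pairing (\<lambda>_. 0) x = 0"
  by (simp add: pairing_def)

lemma pairing_zero_right [simp]: "pairing v (\<lambda>_. 0) = 0"
  by (simp add: pairing_def)

lemma pairing_smult_left: "fin_supp u \<Longrightarrow> pairing (\<lambda>j. c * u j) x = c * pairing u x"
  using pairing_add_smult_left[of "\<lambda>_. 0" u c x] lin_closed_zero[OF lin_closed_fin_supp] by simp

lemma pairing_add_left: "fin_supp u \<Longrightarrow> fin_supp v \<Longrightarrow> pairing (\<lambda>j. u j + v j) x = pairing u x + pairing v x"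
  using pairing_add_smult_left[of u v 1 x] by simp

lemma pairing_sum_left:
  fixes M :: nat
  assumes "\<And>n. n < M \<Longrightarrow> fin_supp (g n)"
  shows "pairing (\<lambda>j. \<Sum>n<M. c n * g n j) x = (\<Sum>n<M. c n * pairing (g n) x)"
  using assms
proof (induction M)
  case (Suc M)
  have "fin_supp (\<lambda>j. \<Sum>n<M. c n * g n j)"
    using lin_closed_sum[OF lin_closed_fin_supp, of M g c] Suc.prems by simp
  then show ?case
    using Suc pairing_add_smult_left[of _ "g M" "c M" x] by simp
qed simp

lemma sum_lessThan_pad:
  fixes M :: nat
  assumes "\<And>n. M \<le> n \<Longrightarrow> f n = 0" "M \<le> B"
  shows "(\<Sum>n<B. f n) = (\<Sum>n<M. f n)"
  using assms by (intro sum.mono_neutral_right) auto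

lemma int_subgroup_generator:
  fixes G :: "int set"
  assumes "g \<in> G" "g \<noteq> 0" and closed: "\<And>x y c. x \<in> G \<Longrightarrow> y \<in> G \<Longrightarrow> x + c * y \<in> G"
  shows "\<exists>d>0. d \<in> G \<and> (\<forall>y\<in>G. d dvd y)"
proof -
  have "\<bar>g\<bar> \<in> G"
    using closed[OF assms(1) assms(1), of "-2"] assms(1) by (cases "g \<ge> 0") auto
  then obtain d where d: "d \<in> G" "d > 0" and least: "\<And>e. e \<in> G \<Longrightarrow> e > 0 \<Longrightarrow> nat d \<le> nat e"
    using ex_has_least_nat[of "\<lambda>e. e \<in> G \<and> e > 0" "\<bar>g\<bar>" nat] assms(2) by auto
  have "d dvd y" if "y \<in> G" for y
  proof -
    have "y + (- (y div d)) * d \<in> G"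
      using closed that d(1) by blast
    then have "y mod d \<in> G"
      by (simp add: minus_div_mult_eq_mod[symmetric] algebra_simps)
    moreover have "0 \<le> y mod d" "y mod d < d"
      using d(2) by simp_all
    ultimately have "y mod d = 0"
      using least[of "y mod d"] by fastforce
    then show ?thesis by presburger
  qed
  then show ?thesis using d by blast
qed

lemma sum_update_scaled:
  fixes \<mu> c :: "nat \<Rightarrow> int"
  assumes "q < m" "\<mu> q = 0"
  shows "(\<Sum>j<m. (if j = q then a else s * \<mu> j) * c j) = a * c q + s * (\<Sum>j<m. \<mu> j * c j)"
proof -
  have q: "q \<in> {..<m}" using assms(1) by simp
  have "(\<Sum>j<m. (if j = q then a else s * \<mu> j) * c j) = (\<Sum>j<m. (if j = q then a * c j else 0) + s * (\<mu> j * c j))"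
    using assms(2) by (intro sum.cong) auto
  also have "\<dots> = a * c q + s * (\<Sum>j<m. \<mu> j * c j)"
    using q by (simp add: sum.distrib sum_distrib_left)
  finally show ?thesis .
qed

text \<open>Back substitution in an echelon system (row \<open>n\<close> starts at column \<open>n\<close>, and a row with
  zero pivot is zero), processing the rows from the bottom up to row \<open>q\<close>.\<close>

lemma echelon_back_substitution:
  fixes \<kappa> :: "nat \<Rightarrow> nat \<Rightarrow> int"
  assumes echelon: "\<And>n j. n < m \<Longrightarrow> j < n \<Longrightarrow> \<kappa> n j = 0"
    and zero_row: "\<And>n j. n < m \<Longrightarrow> \<kappa> n n = 0 \<Longrightarrow> \<kappa> n j = 0"
    and "q \<le> m"
  shows "\<exists>k. k \<noteq> 0 \<and> (\<exists>\<mu>\<in>supp_below m. (\<forall>j<q. \<mu> j = 0) \<and>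
           (\<forall>n. q \<le> n \<and> n < m \<longrightarrow> k * \<kappa> n m = (\<Sum>j<m. \<mu> j * \<kappa> n j)))"
  using \<open>q \<le> m\<close>
proof (induction q rule: inc_induct)
  case base
  show ?case by (intro exI[of _ 1] bexI[of _ "\<lambda>_. 0"]) (auto simp: supp_below_def)
next
  case (step q)
  then obtain k \<mu> where k: "k \<noteq> 0" and \<mu>: "\<mu> \<in> supp_below m" "\<forall>j<Suc q. \<mu> j = 0"
    and rows: "\<forall>n. Suc q \<le> n \<and> n < m \<longrightarrow> k * \<kappa> n m = (\<Sum>j<m. \<mu> j * \<kappa> n j)"
    by blast
  define s where "s = (if \<kappa> q q = 0 then 1 else \<kappa> q q)"
  define a where "a = k * \<kappa> q m - (\<Sum>j<m. \<mu> j * \<kappa> q j)"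
  define \<mu>' where "\<mu>' = (\<lambda>j. if j = q then a else s * \<mu> j)"
  have expand: "(\<Sum>j<m. \<mu>' j * c j) = a * c q + s * (\<Sum>j<m. \<mu> j * c j)" for c
    unfolding \<mu>'_def using step.hyps \<mu>(2) by (intro sum_update_scaled) auto
  have "s * k * \<kappa> n m = (\<Sum>j<m. \<mu>' j * \<kappa> n j)" if "q \<le> n" "n < m" for n
  proof (cases "n = q")
    case True
    show ?thesis
    proof (cases "\<kappa> q q = 0")
      case True
      then show ?thesis using zero_row[of q] step.hyps \<open>n = q\<close> by simp
    next
      case False
      then have "s = \<kappa> q q" by (simp add: s_def)
      then show ?thesis using expand[of "\<kappa> q"] \<open>n = q\<close> by (simp add: a_def algebra_simps)
    qed
  next
    case False
    then show ?thesis
      using that rows echelon[of n q] expand[of "\<kappa> n"] by simp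
  qed
  moreover have "\<mu>' \<in> supp_below m" "\<forall>j<q. \<mu>' j = 0"
    using \<mu> step.hyps by (auto simp: supp_below_def \<mu>'_def)
  moreover have "s * k \<noteq> 0"
    using k by (simp add: s_def)
  ultimately show ?case by blast
qed

lemma echelon_column_dependence:
  fixes \<kappa> :: "nat \<Rightarrow> nat \<Rightarrow> int"
  assumes "\<And>n j. n < m \<Longrightarrow> j < n \<Longrightarrow> \<kappa> n j = 0"
    and "\<And>n j. n < m \<Longrightarrow> \<kappa> n n = 0 \<Longrightarrow> \<kappa> n j = 0"
  shows "\<exists>k>0. \<exists>\<mu>\<in>supp_below m. \<forall>n<m. k * \<kappa> n m = (\<Sum>j<m. \<mu> j * \<kappa> n j)"
proof -
  have "\<exists>k. k \<noteq> 0 \<and> (\<exists>\<mu>\<in>supp_below m. (\<forall>j<0. \<mu> j = 0) \<and>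
           (\<forall>n. 0 \<le> n \<and> n < m \<longrightarrow> k * \<kappa> n m = (\<Sum>j<m. \<mu> j * \<kappa> n j)))"
    by (rule echelon_back_substitution) (use assms in auto)
  then obtain k \<mu> where "k \<noteq> 0" "\<mu> \<in> supp_below m"
    and rows: "\<forall>n<m. k * \<kappa> n m = (\<Sum>j<m. \<mu> j * \<kappa> n j)"
    by auto
  have "(\<lambda>j. sgn k * \<mu> j) \<in> supp_below m"
    using \<open>\<mu> \<in> supp_below m\<close> by (auto simp: supp_below_def)
  moreover have "\<bar>k\<bar> * \<kappa> n m = (\<Sum>j<m. sgn k * \<mu> j * \<kappa> n j)" if "n < m" for n
  proof -
    have "\<bar>k\<bar> * \<kappa> n m = sgn k * (k * \<kappa> n m)"
      by (simp add: abs_sgn)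
    also have "\<dots> = (\<Sum>j<m. sgn k * \<mu> j * \<kappa> n j)"
      using rows that by (simp add: sum_distrib_left mult.assoc)
    finally show ?thesis .
  qed
  ultimately show ?thesis
    using \<open>k \<noteq> 0\<close> by (intro exI[of _ "\<bar>k\<bar>"] conjI bexI[of _ "\<lambda>j. sgn k * \<mu> j"]) auto
qed

section \<open>Graded bases\<close>

text \<open>A filtration of \<open>\<int>\<close>-modules whose successive quotients \<open>A (Suc m) / A m\<close> are
  cyclic, generated by \<open>g m\<close>, and either trivial or free.\<close>

locale graded_basis =
  fixes A :: "nat \<Rightarrow> ('a \<Rightarrow> int) set" and g :: "nat \<Rightarrow> 'a \<Rightarrow> int"
  assumes lin_closed_level: "lin_closed (A m)"
    and level_mono: "A m \<subseteq> A (Suc m)"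
    and gen_in_level: "g m \<in> A (Suc m)"
    and gen_spans: "u \<in> A (Suc m) \<Longrightarrow> \<exists>q. (\<lambda>j. u j - q * g m j) \<in> A m"
    and gen_indep: "(\<lambda>j. c * g m j) \<in> A m \<Longrightarrow> c * g m j = 0"
begin

lemma level_mono_le: "m \<le> m' \<Longrightarrow> A m \<subseteq> A m'"
  using lift_Suc_mono_le[of A] level_mono by blast

lemma decompose: "u \<in> A M \<Longrightarrow> \<exists>b. (\<lambda>j. u j - (\<Sum>n<M. b n * g n j)) \<in> A 0"
proof (induction M arbitrary: u)
  case (Suc M)
  obtain q where "(\<lambda>j. u j - q * g M j) \<in> A M"
    using gen_spans[OF Suc.prems] by blast
  then obtain b where "(\<lambda>j. (u j - q * g M j) - (\<Sum>n<M. b n * g n j)) \<in> A 0"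
    using Suc.IH by blast
  then have "(\<lambda>j. u j - (\<Sum>n<Suc M. (b(M := q)) n * g n j)) \<in> A 0"
    by (simp add: algebra_simps)
  then show ?case by blast
qed auto

lemma independent:
  assumes "(\<lambda>j. \<Sum>n<M. b n * g n j) \<in> A 0" "n < M"
  shows "b n * g n j = 0"
  using assms
proof (induction M)
  case (Suc M)
  have partial: "(\<lambda>j. \<Sum>n<M. b n * g n j) \<in> A M"
    using gen_in_level level_mono_le[of "Suc _" M]
    by (intro lin_closed_sum[OF lin_closed_level]) (auto simp: Suc_le_eq)
  have "(\<lambda>j. \<Sum>n<Suc M. b n * g n j) \<in> A M"
    using Suc.prems(1) level_mono_le[of 0 M] by blast
  from lin_closed_diff_smult[OF lin_closed_level this partial, of 1]
  have last_zero: "b M * g M j = 0" for j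
    by (intro gen_indep) simp
  then have "(\<lambda>j. \<Sum>n<M. b n * g n j) \<in> A 0"
    using Suc.prems(1) by (simp only: sum.lessThan_Suc last_zero add_0_right)
  then show ?case
    using Suc last_zero less_Suc_eq by auto
qed simp

end

text \<open>\<open>\<rho>\<close> embeds \<open>B / A\<close> into \<open>\<int>\<close>, so the quotient is cyclic.\<close>

lemma graded_generator_exists:
  assumes B: "lin_closed B" and "A \<subseteq> B"
    and \<rho>_lin: "\<And>u v c. u \<in> B \<Longrightarrow> v \<in> B \<Longrightarrow> \<rho> (\<lambda>j. u j + c * v j) = \<rho> u + c * \<rho> v"
    and \<rho>_ker: "\<And>u. u \<in> B \<Longrightarrow> \<rho> u = 0 \<longleftrightarrow> u \<in> A"
  shows "\<exists>g\<in>B. (\<forall>u\<in>B. \<exists>q. (\<lambda>j. u j - q * g j) \<in> A) \<and> (\<forall>c j. (\<lambda>j. c * g j) \<in> A \<longrightarrow> c * g j = 0)"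
proof (cases "\<exists>u\<in>B. \<rho> u \<noteq> 0")
  case False
  then show ?thesis
    using \<rho>_ker lin_closed_zero[OF B] by (intro bexI[of _ "\<lambda>_. 0"]) auto
next
  case True
  have \<rho>_smult: "\<rho> (\<lambda>j. c * u j) = c * \<rho> u" if "u \<in> B" for u c
    using \<rho>_lin[OF lin_closed_zero[OF B] that, of c] \<rho>_lin[OF lin_closed_zero[OF B] lin_closed_zero[OF B], of 1]
    by simp
  from True obtain u0 where "u0 \<in> B" "\<rho> u0 \<noteq> 0" by blast
  moreover have "x + c * y \<in> \<rho> ` B" if xy: "x \<in> \<rho> ` B" "y \<in> \<rho> ` B" for x y c
  proof -
    obtain u v where "u \<in> B" "v \<in> B" "x = \<rho> u" "y = \<rho> v"
      using xy by blast
    then show ?thesis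
      using \<rho>_lin lin_closed_add_smult[OF B] by (intro image_eqI[of _ _ "\<lambda>j. u j + c * v j"]) auto
  qed
  ultimately obtain d where "d > 0" "d \<in> \<rho> ` B" and d_dvd: "\<forall>y\<in>\<rho> ` B. d dvd y"
    using int_subgroup_generator[of "\<rho> u0" "\<rho> ` B"] by blast
  then obtain g where g: "g \<in> B" "\<rho> g = d" by blast
  have "\<exists>q. (\<lambda>j. u j - q * g j) \<in> A" if "u \<in> B" for u
  proof -
    have "d dvd \<rho> u"
      using d_dvd that by simp
    then obtain e where "\<rho> u = d * e" ..
    then have "\<rho> (\<lambda>j. u j - e * g j) = 0"
      using \<rho>_lin[OF that g(1), of "- e"] g(2) by simp
    then show ?thesis
      using \<rho>_ker[OF lin_closed_diff_smult[OF B that g(1)]] by blast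
  qed
  moreover have "c * g j = 0" if "(\<lambda>j. c * g j) \<in> A" for c j
  proof -
    have "\<rho> (\<lambda>j. c * g j) = 0"
      using that \<rho>_ker[of "\<lambda>j. c * g j"] \<open>A \<subseteq> B\<close> by blast
    then have "c * d = 0"
      using \<rho>_smult[OF g(1)] g(2) by simp
    then show ?thesis using \<open>d > 0\<close> by simp
  qed
  ultimately show ?thesis
    using g(1) by (intro bexI[of _ g]) auto
qed

lemma graded_basis_exists:
  assumes "\<And>m. lin_closed (A m)" "\<And>m. A m \<subseteq> A (Suc m)"
    and "\<And>m u v c. u \<in> A (Suc m) \<Longrightarrow> v \<in> A (Suc m) \<Longrightarrow>
           \<rho> m (\<lambda>j. u j + c * v j) = \<rho> m u + c * \<rho> m v"
    and "\<And>m u. u \<in> A (Suc m) \<Longrightarrow> \<rho> m u = 0 \<longleftrightarrow> u \<in> A m"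
  shows "\<exists>g. graded_basis A g"
proof -
  have "\<exists>g\<in>A (Suc m). (\<forall>u\<in>A (Suc m). \<exists>q. (\<lambda>j. u j - q * g j) \<in> A m) \<and>
          (\<forall>c j. (\<lambda>j. c * g j) \<in> A m \<longrightarrow> c * g j = 0)" for m
    by (rule graded_generator_exists[where \<rho> = "\<rho> m"]) (use assms in auto)
  then have "\<forall>m. \<exists>g. g \<in> A (Suc m) \<and> (\<forall>u\<in>A (Suc m). \<exists>q. (\<lambda>j. u j - q * g j) \<in> A m) \<and>
          (\<forall>c j. (\<lambda>j. c * g j) \<in> A m \<longrightarrow> c * g j = 0)"
    by blast
  from choice[OF this] obtain g where "\<forall>m. g m \<in> A (Suc m) \<and> (\<forall>u\<in>A (Suc m). \<exists>q. (\<lambda>j. u j - q * g m j) \<in> A m) \<and>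
          (\<forall>c j. (\<lambda>j. c * g m j) \<in> A m \<longrightarrow> c * g m j = 0)"
    by blast
  then have "graded_basis A g"
    using assms(1,2) by unfold_locales auto
  then show ?thesis by blast
qed

section \<open>Products of discrete spaces\<close>

lemma open_fun_cylinder:
  fixes U :: "('a \<Rightarrow> 'b::topological_space) set"
  assumes "open U" "x \<in> U"
  obtains J where "finite J" "\<And>y. (\<forall>i\<in>J. y i = x i) \<Longrightarrow> y \<in> U"
proof -
  obtain X where X: "x \<in> (\<Pi>\<^sub>E i\<in>UNIV. X i)" "finite {i. X i \<noteq> UNIV}" "(\<Pi>\<^sub>E i\<in>UNIV. X i) \<subseteq> U"
    using product_topology_open_contains_basis[of "\<lambda>_. euclidean" UNIV U x] assms
    by (auto simp: open_fun_def)
  have "y \<in> U" if "\<forall>i\<in>{i. X i \<noteq> UNIV}. y i = x i" for y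
  proof -
    have "y i \<in> X i" for i
      using that X(1) by (cases "X i = UNIV") (auto simp: PiE_iff)
    then show ?thesis using X(3) by (auto simp: PiE_iff)
  qed
  then show ?thesis using that X(2) by blast
qed

lemma continuous_on_finitely_dependent:
  fixes h :: "('a \<Rightarrow> 'b::discrete_topology) \<Rightarrow> 'c::topological_space"
  assumes "finite J" "\<And>p q. (\<forall>k\<in>J. p k = q k) \<Longrightarrow> h p = h q"
  shows "continuous_on S h"
proof -
  have "open (h -` B)" if "open B" for B
  proof (subst open_subopen, intro ballI)
    fix p assume "p \<in> h -` B"
    moreover have "open {q. \<forall>k\<in>J. q (id k) \<in> {p k}}"
      using assms(1) by (intro product_topology_basis') (simp_all add: open_discrete)
    ultimately show "\<exists>T. open T \<and> p \<in> T \<and> T \<subseteq> h -` B"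
      using assms(2) by (intro exI[of _ "{q. \<forall>k\<in>J. q (id k) \<in> {p k}}"]) force
  qed
  then have "continuous_on UNIV h"
    by (simp add: continuous_on_open_vimage)
  then show ?thesis
    by (rule continuous_on_subset) simp
qed

lemma continuous_on_finitely_dependent_coords:
  fixes h :: "('a \<Rightarrow> 'b::discrete_topology) \<Rightarrow> 'i \<Rightarrow> 'c::topological_space"
  assumes "\<And>i. \<exists>J. finite J \<and> (\<forall>p q. (\<forall>k\<in>J. p k = q k) \<longrightarrow> h p i = h q i)"
  shows "continuous_on S h"
proof (rule continuous_on_coordinatewise_then_product)
  fix i
  from assms obtain J where "finite J" "\<forall>p q. (\<forall>k\<in>J. p k = q k) \<longrightarrow> h p i = h q i"
    by blast
  then show "continuous_on S (\<lambda>p. h p i)"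
    by (intro continuous_on_finitely_dependent) auto
qed

lemma Hausdorff_space_euclidean_t2: "Hausdorff_space (euclidean :: 'a::t2_space topology)"
  unfolding Hausdorff_space_def disjnt_def open_openin[symmetric] using hausdorff by blast

lemma compact_imp_closed_fun:
  fixes S :: "('a \<Rightarrow> 'b::t2_space) set"
  assumes "compact S"
  shows "closed S"
proof -
  have "Hausdorff_space (product_topology (\<lambda>_::'a. euclidean :: 'b topology) UNIV)"
    unfolding Hausdorff_space_product_topology using Hausdorff_space_euclidean_t2 by blast
  then have "Hausdorff_space (euclidean :: ('a \<Rightarrow> 'b) topology)"
    by (simp only: euclidean_product_topology)
  moreover have "compactin euclidean S"
    using assms by (simp only: compactin_euclidean_iff)
  ultimately have "closedin euclidean S"
    by (rule compactin_imp_closedin)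
  then show ?thesis
    by (simp only: closed_closedin)
qed

lemma compact_UNIV_fun_finite: "compact (UNIV :: ('a \<Rightarrow> 'b::{finite, topological_space}) set)"
proof -
  have "compact_space (euclidean :: 'b topology)"
    by (simp add: compact_space_def finite_imp_compact)
  then have "compact_space (product_topology (\<lambda>_::'a. euclidean :: 'b topology) UNIV)"
    by (simp add: compact_space_product_topology)
  then show ?thesis
    by (simp add: euclidean_product_topology compact_space_def)
qed

lemma closed_imp_compact_fun_finite:
  fixes S :: "('a \<Rightarrow> 'b::{finite, topological_space}) set"
  shows "closed S \<Longrightarrow> compact S"
  using closed_Int_compact[OF _ compact_UNIV_fun_finite, of S] by simp

text \<open>\<open>g\<close> is a closed map from the compact \<open>T\<close> onto its Hausdorff image, hence a quotient map.\<close>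

lemma continuous_on_compact_image:
  fixes g :: "'a::topological_space \<Rightarrow> 'i \<Rightarrow> 'b::t2_space"
  assumes "compact T" "continuous_on T g" "continuous_on T (h \<circ> g)"
  shows "continuous_on (g ` T) h"
  unfolding continuous_on_closed_invariant
proof (intro allI impI)
  fix B :: "'c::topological_space set"
  assume "closed B"
  then obtain A where A: "closed A" "A \<inter> T = (h \<circ> g) -` B \<inter> T"
    using assms(3) unfolding continuous_on_closed_invariant by blast
  have "compact (g ` (A \<inter> T))"
    using assms(1,2) A(1) by (intro compact_continuous_image closed_Int_compact) (auto elim: continuous_on_subset)
  moreover have "g ` (A \<inter> T) \<inter> g ` T = h -` B \<inter> g ` T"
    using A(2) by auto
  ultimately show "\<exists>A. closed A \<and> A \<inter> g ` T = h -` B \<inter> g ` T"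
    using compact_imp_closed_fun by blast
qed

text \<open>The one-point compactification of \<open>\<nat>\<close> inside the Cantor space:
  \<open>n\<close> is the point \<open>\<lambda>k. k = n\<close> and \<open>\<infinity>\<close> is the point \<open>\<lambda>_. False\<close>.\<close>

definition Ninfty :: "cantor set" where
  "Ninfty = {p. \<forall>j k. p j \<and> p k \<longrightarrow> j = k}"

lemma closed_Ninfty: "closed Ninfty"
proof -
  have pair_open: "open {p::cantor. p j \<and> p k}" for j k
  proof -
    have "open {p::cantor. \<forall>i\<in>{j, k}. p (id i) \<in> {True}}"
      by (intro product_topology_basis') (simp_all add: open_discrete)
    moreover have "{p::cantor. \<forall>i\<in>{j, k}. p (id i) \<in> {True}} = {p. p j \<and> p k}"
      by auto
    ultimately show ?thesis by simp
  qed
  have "closed {p::cantor. p j \<and> p k \<longrightarrow> j = k}" for j k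
    using closed_Collect_imp[OF pair_open[of j k], of "\<lambda>_. j = k"] by (cases "j = k") simp_all
  then show ?thesis
    unfolding Ninfty_def by (intro closed_Collect_all)
qed

lemma continuous_on_Ninfty_eventually_const:
  fixes h :: "cantor \<Rightarrow> 'a::discrete_topology"
  assumes "continuous_on Ninfty h"
  shows "\<exists>N0. \<forall>N\<ge>N0. h (\<lambda>k. k = N) = h (\<lambda>_. False)"
proof -
  have infty: "(\<lambda>_. False) \<in> Ninfty" and points: "(\<lambda>k. k = N) \<in> Ninfty" for N
    by (auto simp: Ninfty_def)
  obtain A where "open A" and A: "A \<inter> Ninfty = h -` {h (\<lambda>_. False)} \<inter> Ninfty"
    using assms open_discrete[of "{h (\<lambda>_. False)}"] unfolding continuous_on_open_invariant by blast
  then have "(\<lambda>_. False) \<in> A"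
    using infty by blast
  then obtain J where "finite J" and J: "\<And>y. (\<forall>k\<in>J. y k = False) \<Longrightarrow> y \<in> A"
    using open_fun_cylinder[OF \<open>open A\<close>] by blast
  obtain N0 where "\<forall>k\<in>J. k < N0"
    using finite_nat_bounded[OF \<open>finite J\<close>] by blast
  then have "(\<lambda>k. k = N) \<in> A" if "N \<ge> N0" for N
    using that by (intro J) auto
  then show ?thesis
    using A points by blast
qed

lemma Least_cong_below:
  fixes p q :: "nat \<Rightarrow> bool"
  assumes agree: "\<forall>k\<le>j. p k = q k" and "p n" "n \<le> j"
  shows "(LEAST n. p n) = (LEAST n. q n)"
proof -
  have p_least: "p (LEAST n. p n)" "(LEAST n. p n) \<le> n"
    using \<open>p n\<close> by (auto intro: LeastI Least_le)
  then have "q (LEAST n. p n)"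
    using agree \<open>n \<le> j\<close> by auto
  moreover have "q n"
    using assms by auto
  then have "q (LEAST n. q n)" "(LEAST n. q n) \<le> n"
    by (auto intro: LeastI Least_le)
  then have "p (LEAST n. q n)"
    using agree \<open>n \<le> j\<close> by auto
  ultimately show ?thesis
    by (simp add: Least_le antisym)
qed

lemma continuous_on_select_first_true:
  fixes xs :: "nat \<Rightarrow> nat \<Rightarrow> 'a::{zero, topological_space}"
  shows "continuous_on S (\<lambda>p::cantor. \<lambda>j. if \<exists>n\<le>j. p n then xs (LEAST n. p n) j else 0)"
proof (rule continuous_on_finitely_dependent_coords, intro exI conjI allI impI)
  fix j and p q :: cantor
  assume "\<forall>k\<in>{..j}. p k = q k"
  then have agree: "\<forall>k\<le>j. p k = q k" by simp
  show "(if \<exists>n\<le>j. p n then xs (LEAST n. p n) j else 0) = (if \<exists>n\<le>j. q n then xs (LEAST n. q n) j else 0)"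
  proof (cases "\<exists>n\<le>j. p n")
    case True
    then show ?thesis
      using agree Least_cong_below[OF agree] by auto
  next
    case False
    then show ?thesis using agree by auto
  qed
qed simp

section \<open>Countable systems of linear forms\<close>

locale row_system =
  fixes r :: "nat \<Rightarrow> nat \<Rightarrow> int"
  assumes fin_supp_row: "fin_supp (r i)"
begin

definition Ker :: "(nat \<Rightarrow> int) set" where
  "Ker = {x. \<forall>i. pairing (r i) x = 0}"

definition Ann :: "(nat \<Rightarrow> int) set" where
  "Ann = {v. fin_supp v \<and> (\<forall>x\<in>Ker. pairing v x = 0)}"

definition Ker_tail :: "nat \<Rightarrow> (nat \<Rightarrow> int) set" where
  "Ker_tail m = {x \<in> Ker. \<forall>j<m. x j = 0}"

definition pivot :: "nat \<Rightarrow> bool" where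
  "pivot m \<longleftrightarrow> (\<exists>x\<in>Ker_tail m. x m \<noteq> 0)"

lemma lin_closed_Ker: "lin_closed Ker"
  by (rule lin_closedI) (simp_all add: Ker_def pairing_add_smult_right)

lemma lin_closed_Ker_tail: "lin_closed (Ker_tail m)"
  using lin_closed_Ker by (auto simp: lin_closed_def Ker_tail_def)

lemma lin_closed_Ann: "lin_closed Ann"
  using lin_closed_fin_supp by (auto simp: lin_closed_def Ann_def pairing_add_smult_left)

lemma row_in_Ann: "r i \<in> Ann"
  using fin_supp_row by (simp add: Ann_def Ker_def)

lemma Ker_tail_Suc: "Ker_tail (Suc m) = {x \<in> Ker_tail m. x m = 0}"
  by (auto simp: Ker_tail_def less_Suc_eq)

lemma Ker_generator_exists:
  "\<exists>g\<in>Ker_tail m. (\<forall>x\<in>Ker_tail m. \<exists>q. (\<lambda>j. x j - q * g j) \<in> Ker_tail (Suc m)) \<and>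
     (\<forall>c j. (\<lambda>j. c * g j) \<in> Ker_tail (Suc m) \<longrightarrow> c * g j = 0)"
  by (rule graded_generator_exists[where \<rho> = "\<lambda>x. x m"]) (auto simp: lin_closed_Ker_tail Ker_tail_Suc)

definition Ker_gen :: "nat \<Rightarrow> nat \<Rightarrow> int" where
  "Ker_gen m = (SOME g. g \<in> Ker_tail m \<and> (\<forall>x\<in>Ker_tail m. \<exists>q. (\<lambda>j. x j - q * g j) \<in> Ker_tail (Suc m)) \<and>
     (\<forall>c j. (\<lambda>j. c * g j) \<in> Ker_tail (Suc m) \<longrightarrow> c * g j = 0))"

lemma Ker_gen:
  shows Ker_gen_in_tail: "Ker_gen m \<in> Ker_tail m"
    and Ker_gen_spans: "x \<in> Ker_tail m \<Longrightarrow> \<exists>q. (\<lambda>j. x j - q * Ker_gen m j) \<in> Ker_tail (Suc m)"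
    and Ker_gen_indep: "(\<lambda>j. c * Ker_gen m j) \<in> Ker_tail (Suc m) \<Longrightarrow> c * Ker_gen m j = 0"
  using someI_ex[OF Ker_generator_exists[unfolded Bex_def, of m]] unfolding Ker_gen_def[symmetric] by blast+

lemma Ker_gen_echelon: "j < m \<Longrightarrow> Ker_gen m j = 0"
  using Ker_gen_in_tail by (simp add: Ker_tail_def)

lemma Ker_gen_zero_pivot: "Ker_gen m m = 0 \<Longrightarrow> Ker_gen m j = 0"
  using Ker_gen_indep[of 1 m j] Ker_gen_in_tail[of m] by (simp add: Ker_tail_Suc)

lemma Ker_reduce: "x \<in> Ker \<Longrightarrow> \<exists>a. (\<lambda>j. x j - (\<Sum>n<M. a n * Ker_gen n j)) \<in> Ker_tail M"
proof (induction M)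
  case 0
  then show ?case by (simp add: Ker_tail_def)
next
  case (Suc M)
  then obtain a where "(\<lambda>j. x j - (\<Sum>n<M. a n * Ker_gen n j)) \<in> Ker_tail M"
    by blast
  from Ker_gen_spans[OF this] obtain q
    where "(\<lambda>j. (x j - (\<Sum>n<M. a n * Ker_gen n j)) - q * Ker_gen M j) \<in> Ker_tail (Suc M)"
    by blast
  then have "(\<lambda>j. x j - (\<Sum>n<Suc M. (a(M := q)) n * Ker_gen n j)) \<in> Ker_tail (Suc M)"
    by (simp add: algebra_simps)
  then show ?case by blast
qed

text \<open>Reduce \<open>x\<close> along the echelon generators: without a pivot at \<open>m\<close> the reduction kills
  coordinate \<open>m\<close> as well, and back substitution in the generators does the rest.\<close>

lemma non_pivot_coordinate_dependent:
  assumes "\<not> pivot m"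
  shows "\<exists>k>0. \<exists>\<mu>\<in>supp_below m. \<forall>x\<in>Ker. k * x m = (\<Sum>j<m. \<mu> j * x j)"
proof -
  obtain k \<mu> where "k > 0" "\<mu> \<in> supp_below m"
    and gen_rows: "\<forall>n<m. k * Ker_gen n m = (\<Sum>j<m. \<mu> j * Ker_gen n j)"
    using echelon_column_dependence[of m Ker_gen] Ker_gen_echelon Ker_gen_zero_pivot by blast
  have "k * x m = (\<Sum>j<m. \<mu> j * x j)" if x: "x \<in> Ker" for x
  proof -
    obtain a where a: "(\<lambda>j. x j - (\<Sum>n<m. a n * Ker_gen n j)) \<in> Ker_tail m"
      using Ker_reduce[OF x] by blast
    then have "x m - (\<Sum>n<m. a n * Ker_gen n m) = 0"
      using assms by (auto simp: pivot_def)
    with a have x_eq: "x j = (\<Sum>n<m. a n * Ker_gen n j)" if "j \<le> m" for j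
      using that by (cases "j = m") (auto simp: Ker_tail_def)
    have "k * x m = (\<Sum>n<m. a n * (k * Ker_gen n m))"
      by (simp add: x_eq sum_distrib_left algebra_simps)
    also have "\<dots> = (\<Sum>n<m. \<Sum>j<m. \<mu> j * (a n * Ker_gen n j))"
      using gen_rows by (simp add: sum_distrib_left algebra_simps)
    also have "\<dots> = (\<Sum>j<m. \<mu> j * x j)"
      by (subst sum.swap) (simp add: x_eq sum_distrib_left)
    finally show ?thesis .
  qed
  then show ?thesis
    using \<open>k > 0\<close> \<open>\<mu> \<in> supp_below m\<close> by blast
qed

text \<open>\<open>Sat m\<close> is the saturation of \<open>supp_below m + Ann\<close>. It rises from \<open>Sat 0 = Ann\<close> to all
  finitely supported vectors, so a graded basis of it complements \<open>Ann\<close>.\<close>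

definition Sat :: "nat \<Rightarrow> (nat \<Rightarrow> int) set" where
  "Sat m = {u. fin_supp u \<and> (\<exists>k>0. \<exists>w\<in>supp_below m. \<exists>\<nu>\<in>Ann. \<forall>j. k * u j = w j + \<nu> j)}"

lemma SatE:
  assumes "u \<in> Sat m"
  obtains k w \<nu> where "k > 0" "w \<in> supp_below m" "\<nu> \<in> Ann" "\<And>j. k * u j = w j + \<nu> j"
  using assms by (auto simp: Sat_def)

lemma Sat_fin_supp: "u \<in> Sat m \<Longrightarrow> fin_supp u"
  by (simp add: Sat_def)

lemma SatI:
  assumes "fin_supp u" "k > 0" "w \<in> supp_below m" "\<nu> \<in> Ann" "\<And>j. k * u j = w j + \<nu> j"
  shows "u \<in> Sat m"
  using assms unfolding Sat_def by blast

lemma lin_closed_Sat: "lin_closed (Sat m)"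
proof (rule lin_closedI)
  show "(\<lambda>_. 0) \<in> Sat m"
    by (rule SatI[of _ 1 "\<lambda>_. 0" _ "\<lambda>_. 0"])
      (simp_all add: lin_closed_zero lin_closed_Ann lin_closed_supp_below fin_supp_def supp_below_def)
next
  fix u v c
  assume u: "u \<in> Sat m" and v: "v \<in> Sat m"
  obtain k1 w1 \<nu>1 where 1: "k1 > 0" "w1 \<in> supp_below m" "\<nu>1 \<in> Ann" "\<And>j. k1 * u j = w1 j + \<nu>1 j"
    using u by (auto elim: SatE)
  obtain k2 w2 \<nu>2 where 2: "k2 > 0" "w2 \<in> supp_below m" "\<nu>2 \<in> Ann" "\<And>j. k2 * v j = w2 j + \<nu>2 j"
    using v by (auto elim: SatE)
  show "(\<lambda>j. u j + c * v j) \<in> Sat m"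
  proof (rule SatI)
    show "fin_supp (\<lambda>j. u j + c * v j)"
      using Sat_fin_supp[OF u] Sat_fin_supp[OF v] lin_closed_add_smult[OF lin_closed_fin_supp] by simp
    show "(\<lambda>j. k2 * w1 j + (c * k1) * w2 j) \<in> supp_below m"
      using 1(2) 2(2) by (rule lin_closed_comb[OF lin_closed_supp_below])
    show "(\<lambda>j. k2 * \<nu>1 j + (c * k1) * \<nu>2 j) \<in> Ann"
      using 1(3) 2(3) by (rule lin_closed_comb[OF lin_closed_Ann])
    show "k1 * k2 > 0"
      using 1(1) 2(1) by simp
    fix j
    have "(k1 * k2) * (u j + c * v j) = k2 * (k1 * u j) + (c * k1) * (k2 * v j)"
      by (simp add: algebra_simps)
    also have "\<dots> = (k2 * w1 j + (c * k1) * w2 j) + (k2 * \<nu>1 j + (c * k1) * \<nu>2 j)"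
      unfolding 1(4) 2(4) by (simp add: algebra_simps)
    finally show "(k1 * k2) * (u j + c * v j) = (k2 * w1 j + (c * k1) * w2 j) + (k2 * \<nu>1 j + (c * k1) * \<nu>2 j)" .
  qed
qed

lemma supp_below_subset_Sat: "supp_below m \<subseteq> Sat m"
proof
  fix u assume "u \<in> supp_below m"
  then show "u \<in> Sat m"
    by (intro SatI[of u 1 u m "\<lambda>_. 0"]) (auto simp: fin_supp_def lin_closed_zero[OF lin_closed_Ann])
qed

lemma Ann_subset_Sat: "Ann \<subseteq> Sat m"
proof
  fix u assume "u \<in> Ann"
  then show "u \<in> Sat m"
    by (intro SatI[of u 1 "\<lambda>_. 0" m u]) (auto simp: Ann_def lin_closed_zero[OF lin_closed_supp_below])
qed

lemma Sat_mono: "Sat m \<subseteq> Sat (Suc m)"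
  using supp_below_mono[of m "Suc m"] by (force simp: Sat_def)

lemma pairing_Sat_Ker:
  assumes "\<And>j. k * u j = w j + \<nu> j" "fin_supp u" "w \<in> supp_below M" "\<nu> \<in> Ann" "x \<in> Ker"
  shows "k * pairing u x = (\<Sum>j<M. w j * x j)"
proof -
  have "(\<lambda>j. k * u j) = (\<lambda>j. w j + \<nu> j)"
    using assms(1) by simp
  then have "k * pairing u x = pairing (\<lambda>j. w j + \<nu> j) x"
    using pairing_smult_left[OF assms(2)] by metis
  also have "\<dots> = pairing w x"
    using assms(3-5) by (subst pairing_add_left) (auto simp: fin_supp_def Ann_def)
  finally show ?thesis
    using pairing_supp_below[OF assms(3)] by simp
qed

lemma Sat_0: "Sat 0 = Ann"
proof
  show "Sat 0 \<subseteq> Ann"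
  proof
    fix u assume "u \<in> Sat 0"
    then obtain k w \<nu> where "k > 0" "w \<in> supp_below 0" "\<nu> \<in> Ann" "\<And>j. k * u j = w j + \<nu> j"
      by (auto elim: SatE)
    then show "u \<in> Ann"
      using pairing_Sat_Ker[of k u w \<nu> 0] Sat_fin_supp[OF \<open>u \<in> Sat 0\<close>] by (simp add: Ann_def)
  qed
qed (rule Ann_subset_Sat)

lemma Sat_saturated:
  assumes "fin_supp u" "k > 0" "(\<lambda>j. k * u j) \<in> Sat m"
  shows "u \<in> Sat m"
proof -
  obtain k' w \<nu> where "k' > 0" "w \<in> supp_below m" "\<nu> \<in> Ann" "\<And>j. k' * (k * u j) = w j + \<nu> j"
    using assms(3) by (auto elim: SatE)
  then show ?thesis
    using assms(1,2) by (intro SatI[of u "k' * k" w m \<nu>]) (simp_all add: mult.assoc)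
qed

lemma unit_vector_in_Sat_non_pivot:
  assumes "\<not> pivot m"
  shows "(\<lambda>j. if j = m then 1 else 0) \<in> Sat m"
proof -
  obtain k \<mu> where "k > 0" "\<mu> \<in> supp_below m" and dep: "\<forall>x\<in>Ker. k * x m = (\<Sum>j<m. \<mu> j * x j)"
    using non_pivot_coordinate_dependent[OF assms] by blast
  define \<nu> where "\<nu> = (\<lambda>j. k * (if j = m then 1 else 0) - \<mu> j)"
  have \<nu>_supp: "\<nu> \<in> supp_below (Suc m)"
    using \<open>\<mu> \<in> supp_below m\<close> by (auto simp: supp_below_def \<nu>_def)
  have "pairing \<nu> x = 0" if "x \<in> Ker" for x
  proof -
    have "pairing \<nu> x = (\<Sum>j<Suc m. \<nu> j * x j)"
      by (rule pairing_supp_below[OF \<nu>_supp])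
    also have "\<dots> = k * x m - (\<Sum>j<m. \<mu> j * x j)"
      using \<open>\<mu> \<in> supp_below m\<close> by (simp add: \<nu>_def supp_below_def sum_subtractf left_diff_distrib)
    finally show ?thesis
      using dep that by simp
  qed
  then have "\<nu> \<in> Ann"
    using \<nu>_supp by (auto simp: Ann_def fin_supp_def)
  then show ?thesis
    using \<open>k > 0\<close> \<open>\<mu> \<in> supp_below m\<close>
    by (intro SatI[of _ k \<mu> m \<nu>]) (auto simp: \<nu>_def fin_supp_def supp_below_def intro!: exI[of _ "Suc m"])
qed

lemma Sat_Suc_non_pivot:
  assumes "\<not> pivot m" "u \<in> Sat (Suc m)"
  shows "u \<in> Sat m"
proof -
  obtain k w \<nu> where "k > 0" "w \<in> supp_below (Suc m)" "\<nu> \<in> Ann" and u: "\<And>j. k * u j = w j + \<nu> j"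
    using assms(2) by (auto elim: SatE)
  have "w(m := 0) \<in> supp_below m"
    using \<open>w \<in> supp_below (Suc m)\<close> by (auto simp: supp_below_def)
  then have "w(m := 0) \<in> Sat m"
    using supp_below_subset_Sat by blast
  moreover have "\<nu> \<in> Sat m"
    using \<open>\<nu> \<in> Ann\<close> Ann_subset_Sat by blast
  ultimately have "(\<lambda>j. (w(m := 0)) j + w m * (if j = m then 1 else 0) + 1 * \<nu> j) \<in> Sat m"
    using lin_closed_add_smult[OF lin_closed_Sat _ unit_vector_in_Sat_non_pivot[OF assms(1)], of "w(m := 0)" "w m"]
      lin_closed_add_smult[OF lin_closed_Sat] by blast
  moreover have "(\<lambda>j. (w(m := 0)) j + w m * (if j = m then 1 else 0) + 1 * \<nu> j) = (\<lambda>j. k * u j)"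
    using u by (auto simp: fun_eq_iff)
  ultimately show ?thesis
    using Sat_saturated[OF Sat_fin_supp[OF assms(2)] \<open>k > 0\<close>] by simp
qed

definition pivot_vec :: "nat \<Rightarrow> nat \<Rightarrow> int" where
  "pivot_vec m = (SOME x. x \<in> Ker_tail m \<and> x m \<noteq> 0)"

lemma pivot_vec:
  assumes "pivot m"
  shows "pivot_vec m \<in> Ker_tail m" "pivot_vec m m \<noteq> 0"
  using someI_ex[of "\<lambda>x. x \<in> Ker_tail m \<and> x m \<noteq> 0"] assms unfolding pivot_def pivot_vec_def by auto

lemma Sat_Suc_pivot_iff:
  assumes "pivot m" "u \<in> Sat (Suc m)"
  shows "u \<in> Sat m \<longleftrightarrow> pairing u (pivot_vec m) = 0"
proof
  assume "u \<in> Sat m"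
  then obtain k w \<nu> where "k > 0" "w \<in> supp_below m" "\<nu> \<in> Ann" "\<And>j. k * u j = w j + \<nu> j"
    by (auto elim: SatE)
  then have "k * pairing u (pivot_vec m) = (\<Sum>j<m. w j * pivot_vec m j)"
    using pivot_vec[OF assms(1)] Sat_fin_supp[OF assms(2)] by (intro pairing_Sat_Ker) (auto simp: Ker_tail_def)
  also have "\<dots> = 0"
    using pivot_vec(1)[OF assms(1)] by (simp add: Ker_tail_def)
  finally show "pairing u (pivot_vec m) = 0"
    using \<open>k > 0\<close> by simp
next
  assume pairing_zero: "pairing u (pivot_vec m) = 0"
  obtain k w \<nu> where "k > 0" "w \<in> supp_below (Suc m)" "\<nu> \<in> Ann" and u: "\<And>j. k * u j = w j + \<nu> j"
    using assms(2) by (auto elim: SatE)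
  then have "k * pairing u (pivot_vec m) = (\<Sum>j<Suc m. w j * pivot_vec m j)"
    using pivot_vec[OF assms(1)] Sat_fin_supp[OF assms(2)] by (intro pairing_Sat_Ker) (auto simp: Ker_tail_def)
  also have "\<dots> = w m * pivot_vec m m"
    using pivot_vec(1)[OF assms(1)] by (simp add: Ker_tail_def)
  finally have "w \<in> supp_below m"
    using pairing_zero pivot_vec(2)[OF assms(1)] supp_below_Suc_iff[OF \<open>w \<in> supp_below (Suc m)\<close>] by simp
  then show "u \<in> Sat m"
    using Sat_fin_supp[OF assms(2)] \<open>k > 0\<close> \<open>\<nu> \<in> Ann\<close> u by (intro SatI)
qed

lemma graded_basis_Sat_exists: "\<exists>g. graded_basis Sat g"
proof (rule graded_basis_exists[where \<rho> = "\<lambda>m u. if pivot m then pairing u (pivot_vec m) else 0"])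
  fix m u v c
  assume "u \<in> Sat (Suc m)" "v \<in> Sat (Suc m)"
  then show "(if pivot m then pairing (\<lambda>j. u j + c * v j) (pivot_vec m) else 0) =
      (if pivot m then pairing u (pivot_vec m) else 0) + c * (if pivot m then pairing v (pivot_vec m) else 0)"
    by (simp add: pairing_add_smult_left Sat_fin_supp)
next
  fix m u
  assume "u \<in> Sat (Suc m)"
  then show "(if pivot m then pairing u (pivot_vec m) else 0) = 0 \<longleftrightarrow> u \<in> Sat m"
    using Sat_Suc_pivot_iff Sat_Suc_non_pivot by auto
qed (simp_all add: lin_closed_Sat Sat_mono)

lemma graded_basis_Ann_exists: "\<exists>g. graded_basis (\<lambda>m. Ann \<inter> supp_below m) g"
  by (rule graded_basis_exists[where \<rho> = "\<lambda>m u. u m"])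
    (use supp_below_subset_Suc in
      \<open>auto simp: lin_closed_Int lin_closed_Ann lin_closed_supp_below supp_below_Suc_iff\<close>)

definition cobasis :: "nat \<Rightarrow> nat \<Rightarrow> int" where
  "cobasis = (SOME g. graded_basis Sat g)"

definition ann_basis :: "nat \<Rightarrow> nat \<Rightarrow> int" where
  "ann_basis = (SOME g. graded_basis (\<lambda>m. Ann \<inter> supp_below m) g)"

sublocale cob: graded_basis Sat cobasis
  using someI_ex[OF graded_basis_Sat_exists] unfolding cobasis_def .

sublocale ann: graded_basis "\<lambda>m. Ann \<inter> supp_below m" ann_basis
  using someI_ex[OF graded_basis_Ann_exists] unfolding ann_basis_def .

lemma ann_basis_in_Ann: "ann_basis m \<in> Ann"
  using ann.gen_in_level by blast

lemma ann_basis_supp_below: "ann_basis m \<in> supp_below (Suc m)"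
  using ann.gen_in_level by blast

lemma Ann_expansion:
  assumes "u \<in> Ann" "u \<in> supp_below M"
  shows "\<exists>\<alpha>. \<forall>j. u j = (\<Sum>n<M. \<alpha> n * ann_basis n j)"
proof -
  obtain \<alpha> where "(\<lambda>j. u j - (\<Sum>n<M. \<alpha> n * ann_basis n j)) \<in> supp_below 0"
    using ann.decompose[of u M] assms by blast
  then show ?thesis
    by (auto simp: supp_below_0 fun_eq_iff)
qed

lemma basis_expansion:
  assumes "fin_supp u"
  shows "\<exists>M b \<alpha>. (\<forall>n\<ge>M. b n = 0 \<and> \<alpha> n = 0) \<and>
           (\<forall>j. u j = (\<Sum>n<M. b n * cobasis n j + \<alpha> n * ann_basis n j))"
proof -
  obtain M1 where "u \<in> supp_below M1"
    using assms by (auto simp: fin_supp_def)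
  then obtain b where b: "(\<lambda>j. u j - (\<Sum>n<M1. b n * cobasis n j)) \<in> Ann"
    using cob.decompose[of u M1] supp_below_subset_Sat Sat_0 by blast
  then obtain M2 where "(\<lambda>j. u j - (\<Sum>n<M1. b n * cobasis n j)) \<in> supp_below M2"
    by (auto simp: Ann_def fin_supp_def)
  then obtain \<alpha> where \<alpha>: "\<And>j. u j - (\<Sum>n<M1. b n * cobasis n j) = (\<Sum>n<M2. \<alpha> n * ann_basis n j)"
    using Ann_expansion[OF b] by blast
  define M where "M = max M1 M2"
  define b' where "b' n = (if n < M1 then b n else 0)" for n
  define \<alpha>' where "\<alpha>' n = (if n < M2 then \<alpha> n else 0)" for n
  have "(\<Sum>n<M. b' n * cobasis n j) = (\<Sum>n<M1. b n * cobasis n j)" for j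
    by (subst sum_lessThan_pad[of M1]) (auto simp: M_def b'_def)
  moreover have "(\<Sum>n<M. \<alpha>' n * ann_basis n j) = (\<Sum>n<M2. \<alpha> n * ann_basis n j)" for j
    by (subst sum_lessThan_pad[of M2]) (auto simp: M_def \<alpha>'_def)
  ultimately have "u j = (\<Sum>n<M. b' n * cobasis n j + \<alpha>' n * ann_basis n j)" for j
    using \<alpha>[of j] by (simp add: sum.distrib algebra_simps)
  moreover have "\<forall>n\<ge>M. b' n = 0 \<and> \<alpha>' n = 0"
    by (simp add: M_def b'_def \<alpha>'_def)
  ultimately show ?thesis by blast
qed

lemma basis_coeffs_unique:
  assumes "\<And>j. (\<Sum>n<M. b n * cobasis n j + \<alpha> n * ann_basis n j) = 0" "n < M"
  shows "\<alpha> n * ann_basis n j = 0"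
proof -
  have sums: "(\<Sum>n<M. b n * cobasis n j) = (\<Sum>n<M. (- \<alpha> n) * ann_basis n j)" for j
    using assms(1)[of j] by (simp add: sum.distrib sum_negf eq_neg_iff_add_eq_0)
  have "(\<lambda>j. \<Sum>n<M. (- \<alpha> n) * ann_basis n j) \<in> Ann"
    using ann_basis_in_Ann by (intro lin_closed_sum[OF lin_closed_Ann])
  then have "(\<lambda>j. \<Sum>n<M. b n * cobasis n j) \<in> Sat 0"
    using sums Sat_0 by simp
  then have "(\<Sum>n<M. b n * cobasis n j) = 0" for j
    using cob.independent by (intro sum.neutral) blast
  then have "(\<lambda>j. \<Sum>n<M. \<alpha> n * ann_basis n j) = (\<lambda>_. 0)"
    using assms(1) by (simp add: sum.distrib)
  then show ?thesis
    using ann.independent[where M = M and b = \<alpha> and n = n and j = j] assms(2) lin_closed_zero[OF lin_closed_Ann] by (simp add: supp_below_0)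
qed

lemma ann_basis_coeff_delta:
  assumes "b < B" "a < B" "ann_basis a \<noteq> (\<lambda>_. 0)"
    and unit_exp: "\<And>j i. j < Suc b \<Longrightarrow>
      (if i = j then 1 else 0) = (\<Sum>n<B. \<beta> j n * cobasis n i + \<alpha> j n * ann_basis n i)"
  shows "(\<Sum>j<Suc b. ann_basis b j * \<alpha> j a) = (if a = b then 1 else 0)"
proof -
  define \<beta>' where "\<beta>' n = (\<Sum>j<Suc b. ann_basis b j * \<beta> j n)" for n
  define \<gamma> where "\<gamma> n = (\<Sum>j<Suc b. ann_basis b j * \<alpha> j n)" for n
  have delta_sum: "(\<Sum>j<Suc b. ann_basis b j * (if i = j then 1 else 0)) = (\<Sum>j<Suc b. if i = j then ann_basis b j else 0)" for i
    by (rule sum.cong) auto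
  have "ann_basis b i = (\<Sum>n<B. \<beta>' n * cobasis n i + \<gamma> n * ann_basis n i)" for i
  proof -
    have "ann_basis b i = (\<Sum>j<Suc b. ann_basis b j * (if i = j then 1 else 0))"
      using ann_basis_supp_below[of b] delta_sum by (simp add: sum.delta' supp_below_def)
    also have "\<dots> = (\<Sum>j<Suc b. \<Sum>n<B. ann_basis b j * \<beta> j n * cobasis n i + ann_basis b j * \<alpha> j n * ann_basis n i)"
      by (intro sum.cong) (simp_all add: unit_exp sum_distrib_left algebra_simps)
    also have "\<dots> = (\<Sum>n<B. \<Sum>j<Suc b. ann_basis b j * \<beta> j n * cobasis n i + ann_basis b j * \<alpha> j n * ann_basis n i)"
      by (rule sum.swap)
    also have "\<dots> = (\<Sum>n<B. \<beta>' n * cobasis n i + \<gamma> n * ann_basis n i)"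
      by (simp only: \<beta>'_def \<gamma>_def sum.distrib sum_distrib_right)
    finally show ?thesis .
  qed
  moreover have "(\<Sum>n<B. (if n = b then 1 else 0) * ann_basis n i) = ann_basis b i" for i
    using \<open>b < B\<close> by (simp add: if_distrib[of "\<lambda>c. c * _"] sum.delta' cong: if_cong)
  ultimately have "(\<Sum>n<B. \<beta>' n * cobasis n i + (\<gamma> n - (if n = b then 1 else 0)) * ann_basis n i) = 0" for i
    by (simp add: sum.distrib sum_subtractf left_diff_distrib)
  then have "(\<gamma> a - (if a = b then 1 else 0)) * ann_basis a i = 0" for i
    using basis_coeffs_unique[where M = B and b = \<beta>' and \<alpha> = "\<lambda>n. \<gamma> n - (if n = b then 1 else 0)"] \<open>a < B\<close>
    by blast
  moreover obtain i where "ann_basis a i \<noteq> 0"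
    using assms(3) by auto
  ultimately have "\<gamma> a = (if a = b then 1 else 0)"
    by (metis eq_iff_diff_eq_0 mult_eq_0_iff)
  then show ?thesis
    by (simp add: \<gamma>_def)
qed

definition ann_coords :: "(nat \<Rightarrow> int) \<Rightarrow> nat \<Rightarrow> int" where
  "ann_coords x = (\<lambda>a. pairing (ann_basis a) x)"

definition ann_support :: "nat set" where
  "ann_support = {a. ann_basis a \<noteq> (\<lambda>_. 0)}"

lemma Ker_iff_ann_coords: "x \<in> Ker \<longleftrightarrow> ann_coords x = (\<lambda>_. 0)"
proof
  assume "x \<in> Ker"
  then show "ann_coords x = (\<lambda>_. 0)"
    using ann_basis_in_Ann by (simp add: Ann_def ann_coords_def fun_eq_iff)
next
  assume ann_zero: "ann_coords x = (\<lambda>_. 0)"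
  have "pairing (r i) x = 0" for i
  proof -
    obtain M where "r i \<in> supp_below M"
      using fin_supp_row[of i] by (auto simp: fin_supp_def)
    then obtain \<alpha> where "r i = (\<lambda>j. \<Sum>n<M. \<alpha> n * ann_basis n j)"
      using Ann_expansion[OF row_in_Ann] by blast
    then have "pairing (r i) x = (\<Sum>n<M. \<alpha> n * pairing (ann_basis n) x)"
      using pairing_sum_left[of M ann_basis \<alpha> x] ann_basis_in_Ann by (simp add: Ann_def)
    then show ?thesis
      using ann_zero by (simp add: ann_coords_def fun_eq_iff)
  qed
  then show "x \<in> Ker"
    by (simp add: Ker_def)
qed

lemma ann_coords_add: "ann_coords (\<lambda>j. x j + y j) = (\<lambda>a. ann_coords x a + ann_coords y a)"
  using pairing_add_smult_right[of _ x 1 y] by (simp add: ann_coords_def)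

lemma ann_coords_diff: "ann_coords (\<lambda>j. x j - y j) = (\<lambda>a. ann_coords x a - ann_coords y a)"
  by (simp add: ann_coords_def pairing_diff_right)

lemma ann_coords_outside: "a \<notin> ann_support \<Longrightarrow> ann_coords x a = 0"
  by (simp add: ann_support_def ann_coords_def)

lemma continuous_on_ann_coords: "continuous_on S ann_coords"
proof (rule continuous_on_finitely_dependent_coords)
  show "\<exists>J. finite J \<and> (\<forall>p q. (\<forall>k\<in>J. p k = q k) \<longrightarrow> ann_coords p a = ann_coords q a)" for a
    by (intro exI[of _ "{..<Suc a}"]) (simp add: ann_coords_def pairing_supp_below[OF ann_basis_supp_below])
qed

lemma unit_vector_expansions:
  "\<exists>M \<beta> \<alpha>. \<forall>j. (\<forall>n\<ge>M j. \<beta> j n = 0 \<and> \<alpha> j n = 0) \<and>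
     (\<forall>i. (if i = j then 1 else 0) = (\<Sum>n<M j. \<beta> j n * cobasis n i + \<alpha> j n * ann_basis n i))"
proof -
  have "\<exists>M \<beta> \<alpha>. (\<forall>n\<ge>M. \<beta> n = 0 \<and> \<alpha> n = 0) \<and>
      (\<forall>i. (if i = j then 1 else 0) = (\<Sum>n<M. \<beta> n * cobasis n i + \<alpha> n * ann_basis n i))" for j
    by (rule basis_expansion) (auto simp: fin_supp_def supp_below_def intro: exI[of _ "Suc j"])
  from choice[OF allI[OF this]] obtain M where "\<forall>j. \<exists>\<beta> \<alpha>. (\<forall>n\<ge>M j. \<beta> n = 0 \<and> \<alpha> n = 0) \<and>
      (\<forall>i. (if i = j then 1 else 0) = (\<Sum>n<M j. \<beta> n * cobasis n i + \<alpha> n * ann_basis n i))"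
    ..
  from choice[OF this] obtain \<beta> where "\<forall>j. \<exists>\<alpha>. (\<forall>n\<ge>M j. \<beta> j n = 0 \<and> \<alpha> n = 0) \<and>
      (\<forall>i. (if i = j then 1 else 0) = (\<Sum>n<M j. \<beta> j n * cobasis n i + \<alpha> n * ann_basis n i))"
    ..
  from choice[OF this] show ?thesis
    by blast
qed

lemma pairing_ann_basis_dual:
  assumes coeffs_vanish: "\<And>j n. M j \<le> n \<Longrightarrow> \<beta> j n = 0 \<and> \<alpha> j n = 0"
    and unit_exp: "\<And>j i. (if i = j then 1 else 0) = (\<Sum>n<M j. \<beta> j n * cobasis n i + \<alpha> j n * ann_basis n i)"
    and t_zero: "\<And>a. ann_basis a = (\<lambda>_. 0) \<Longrightarrow> t a = 0"
  shows "pairing (ann_basis b) (\<lambda>j. \<Sum>a<M j. \<alpha> j a * t a) = t b"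
proof -
  define B where "B = Suc (b + (\<Sum>j<Suc b. M j))"
  have M_le: "M j \<le> B" if "j < Suc b" for j
    using member_le_sum[of j "{..<Suc b}" M] that by (simp add: B_def)
  have "b < B" by (simp add: B_def)
  have unit_exp_B: "(if i = j then 1 else 0) = (\<Sum>n<B. \<beta> j n * cobasis n i + \<alpha> j n * ann_basis n i)"
    if "j < Suc b" for j i
    using coeffs_vanish M_le[OF that] by (subst sum_lessThan_pad[of "M j"]) (simp_all add: unit_exp)
  have inner_B: "(\<Sum>a<M j. \<alpha> j a * t a) = (\<Sum>a<B. \<alpha> j a * t a)" if "j < Suc b" for j
    using coeffs_vanish M_le[OF that] by (simp add: sum_lessThan_pad[of "M j" _ B])
  have "pairing (ann_basis b) (\<lambda>j. \<Sum>a<M j. \<alpha> j a * t a) = (\<Sum>j<Suc b. ann_basis b j * (\<Sum>a<B. \<alpha> j a * t a))"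
    unfolding pairing_supp_below[OF ann_basis_supp_below] by (intro sum.cong) (simp_all add: inner_B)
  also have "\<dots> = (\<Sum>j<Suc b. \<Sum>a<B. ann_basis b j * \<alpha> j a * t a)"
    by (simp add: sum_distrib_left mult.assoc)
  also have "\<dots> = (\<Sum>a<B. (\<Sum>j<Suc b. ann_basis b j * \<alpha> j a) * t a)"
    by (subst sum.swap) (simp only: sum_distrib_right)
  also have "\<dots> = (\<Sum>a<B. (if a = b then 1 else 0) * t a)"
  proof (rule sum.cong)
    fix a assume "a \<in> {..<B}"
    then show "(\<Sum>j<Suc b. ann_basis b j * \<alpha> j a) * t a = (if a = b then 1 else 0) * t a"
      using t_zero[of a] ann_basis_coeff_delta[OF \<open>b < B\<close> _ _ unit_exp_B, of a]
      by (cases "ann_basis a = (\<lambda>_. 0)") auto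
  qed simp
  also have "\<dots> = t b"
    using \<open>b < B\<close> by (simp add: if_distrib[of "\<lambda>c. c * _"] sum.delta' cong: if_cong)
  finally show ?thesis .
qed

text \<open>The right inverse is the row-finite matrix of coordinates of the unit vectors along \<open>ann_basis\<close>.\<close>

lemma ann_coords_section:
  "\<exists>\<sigma>. continuous_on UNIV \<sigma> \<and> (\<forall>t. (\<forall>a. a \<notin> ann_support \<longrightarrow> t a = 0) \<longrightarrow> ann_coords (\<sigma> t) = t)"
proof -
  obtain M \<beta> \<alpha> where coeffs: "\<forall>j. (\<forall>n\<ge>M j. \<beta> j n = 0 \<and> \<alpha> j n = 0) \<and>
     (\<forall>i. (if i = j then 1 else 0) = (\<Sum>n<M j. \<beta> j n * cobasis n i + \<alpha> j n * ann_basis n i))"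
    using unit_vector_expansions by blast
  define \<sigma> where "\<sigma> t = (\<lambda>j. \<Sum>a<M j. \<alpha> j a * t a)" for t :: "nat \<Rightarrow> int"
  have "continuous_on UNIV \<sigma>"
    unfolding \<sigma>_def
  proof (rule continuous_on_finitely_dependent_coords)
    show "\<exists>J. finite J \<and> (\<forall>p q. (\<forall>k\<in>J. p k = q k) \<longrightarrow> (\<Sum>a<M j. \<alpha> j a * p a) = (\<Sum>a<M j. \<alpha> j a * q a))" for j
      by (intro exI[of _ "{..<M j}"]) auto
  qed
  moreover have "ann_coords (\<sigma> t) = t" if "\<forall>a. a \<notin> ann_support \<longrightarrow> t a = 0" for t
    unfolding ann_coords_def \<sigma>_def
    using coeffs that by (intro ext pairing_ann_basis_dual) (auto simp: ann_support_def)
  ultimately show ?thesis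
    by blast
qed

end

section \<open>The morphism on points and its image\<close>

locale condensed_endomorphism =
  fixes f :: "cantor set \<Rightarrow> (cantor \<Rightarrow> nat \<Rightarrow> int) \<Rightarrow> cantor \<Rightarrow> nat \<Rightarrow> int"
  assumes condensed_endo: "condensed_endo f"
begin

lemma f_sec: "closed S \<Longrightarrow> u \<in> sec S \<Longrightarrow> f S u \<in> sec S"
  using condensed_endo by (simp add: condensed_endo_def light_profinite_def)

lemma f_sadd: "closed S \<Longrightarrow> u \<in> sec S \<Longrightarrow> v \<in> sec S \<Longrightarrow> f S (sadd S u v) = sadd S (f S u) (f S v)"
  using condensed_endo by (simp add: condensed_endo_def light_profinite_def)

lemma f_pull: "closed S \<Longrightarrow> closed T \<Longrightarrow> g \<in> cmap T S \<Longrightarrow> u \<in> sec S \<Longrightarrow> f T (pull T g u) = pull T g (f S u)"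
  using condensed_endo by (simp add: condensed_endo_def light_profinite_def)

definition base_point :: cantor where
  "base_point = (\<lambda>_. False)"

definition point_section :: "(nat \<Rightarrow> int) \<Rightarrow> cantor \<Rightarrow> nat \<Rightarrow> int" where
  "point_section a = (\<lambda>p. if p = base_point then a else undefined)"

definition f_pt :: "(nat \<Rightarrow> int) \<Rightarrow> nat \<Rightarrow> int" where
  "f_pt a = f {base_point} (point_section a) base_point"

lemma closed_base_point: "closed {base_point}"
  by (rule compact_imp_closed_fun) simp

lemma point_section_sec: "point_section a \<in> sec {base_point}"
  by (simp add: sec_def point_section_def)

lemma f_pointwise:
  assumes "closed S" "u \<in> sec S" "p \<in> S"
  shows "f S u p = f_pt (u p)"
proof -
  have "(\<lambda>_. p) \<in> cmap {base_point} S"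
    using assms(3) by (simp add: cmap_def)
  moreover have "pull {base_point} (\<lambda>_. p) u = point_section (u p)"
    by (auto simp: pull_def point_section_def)
  ultimately have "f {base_point} (point_section (u p)) = pull {base_point} (\<lambda>_. p) (f S u)"
    using f_pull[OF assms(1) closed_base_point _ assms(2)] by metis
  then show ?thesis
    by (simp add: f_pt_def pull_def)
qed

lemma f_pt_add: "f_pt (\<lambda>j. a j + b j) = (\<lambda>i. f_pt a i + f_pt b i)"
proof -
  have "sadd {base_point} (point_section a) (point_section b) = point_section (\<lambda>j. a j + b j)"
    by (auto simp: sadd_def point_section_def)
  then show ?thesis
    using f_sadd[OF closed_base_point point_section_sec point_section_sec, of a b]
    by (simp add: f_pt_def sadd_def)
qed

lemma f_pt_zero: "f_pt (\<lambda>_. 0) = (\<lambda>_. 0)"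
  using f_pt_add[of "\<lambda>_. 0" "\<lambda>_. 0"] by (simp add: fun_eq_iff)

lemma f_pt_smult: "f_pt (\<lambda>j. c * a j) = (\<lambda>i. c * f_pt a i)"
proof (induction c rule: int_induct[where k = 0])
  case base
  then show ?case by (simp add: f_pt_zero)
next
  case (step1 c)
  then show ?case
    using f_pt_add[of "\<lambda>j. c * a j" a] by (simp add: algebra_simps)
next
  case (step2 c)
  then show ?case
    using f_pt_add[of "\<lambda>j. (c - 1) * a j" a] by (simp add: algebra_simps fun_eq_iff)
qed

text \<open>Otherwise counterexamples \<open>xs N\<close>, placed at the points \<open>N\<close> of \<open>Ninfty\<close> and glued to \<open>0\<close> at
  \<open>\<infinity>\<close>, form a section on which \<open>f\<close> is discontinuous at \<open>\<infinity>\<close>.\<close>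

lemma f_pt_coord_eventually_zero: "\<exists>M. \<forall>x. (\<forall>j<M. x j = 0) \<longrightarrow> f_pt x i = 0"
proof (rule ccontr)
  assume "\<not> ?thesis"
  then have "\<forall>M. \<exists>x. (\<forall>j<M. x j = 0) \<and> f_pt x i \<noteq> 0"
    by blast
  from choice[OF this] obtain xs where xs: "\<And>M. (\<forall>j<M. xs M j = 0) \<and> f_pt (xs M) i \<noteq> 0"
    by blast
  define U where "U p = (\<lambda>j. if \<exists>n\<le>j. p n then xs (LEAST n. p n) j else 0)" for p :: cantor
  define u where "u p = (if p \<in> Ninfty then U p else undefined)" for p
  have "u \<in> sec Ninfty"
    using continuous_on_select_first_true[of Ninfty xs]
    by (auto simp: sec_def u_def U_def cong: continuous_on_cong)
  then have "continuous_on Ninfty (\<lambda>p. f Ninfty u p i)"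
    using f_sec[OF closed_Ninfty] by (simp add: sec_def continuous_on_product_then_coordinatewise)
  moreover have "f Ninfty u p i = f_pt (U p) i" if "p \<in> Ninfty" for p
    using f_pointwise[OF closed_Ninfty \<open>u \<in> sec Ninfty\<close> that] that by (simp add: u_def)
  ultimately have "continuous_on Ninfty (\<lambda>p. f_pt (U p) i)"
    by (simp cong: continuous_on_cong)
  then obtain N where "f_pt (U (\<lambda>k. k = N)) i = f_pt (U (\<lambda>_. False)) i"
    using continuous_on_Ninfty_eventually_const by blast
  moreover have "U (\<lambda>_. False) = (\<lambda>_. 0)"
    by (simp add: U_def)
  moreover have "U (\<lambda>k. k = N) = xs N"
    using xs[of N] by (auto simp: U_def fun_eq_iff Least_equality not_le)
  ultimately show False
    using xs[of N] f_pt_zero by simp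
qed

definition coord_bound :: "nat \<Rightarrow> nat" where
  "coord_bound i = (SOME M. \<forall>x. (\<forall>j<M. x j = 0) \<longrightarrow> f_pt x i = 0)"

definition row :: "nat \<Rightarrow> nat \<Rightarrow> int" where
  "row i j = (if j < coord_bound i then f_pt (\<lambda>k. if k = j then 1 else 0) i else 0)"

lemma f_pt_vanishes_beyond_coord_bound: "\<forall>j<coord_bound i. x j = 0 \<Longrightarrow> f_pt x i = 0"
  using someI_ex[OF f_pt_coord_eventually_zero[of i]] unfolding coord_bound_def[symmetric] by blast

lemma f_pt_supp_below: "u \<in> supp_below M \<Longrightarrow> f_pt u i = (\<Sum>j<M. u j * f_pt (\<lambda>k. if k = j then 1 else 0) i)"
proof (induction M arbitrary: u)
  case 0
  then show ?case by (simp add: supp_below_0 f_pt_zero)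
next
  case (Suc M)
  define u' where "u' = u(M := 0)"
  have "u = (\<lambda>j. u' j + u M * (if j = M then 1 else 0))"
    by (auto simp: fun_eq_iff u'_def)
  then have "f_pt u i = f_pt u' i + u M * f_pt (\<lambda>k. if k = M then 1 else 0) i"
    by (metis f_pt_add f_pt_smult)
  moreover have "u' \<in> supp_below M"
    using Suc.prems by (auto simp: supp_below_def u'_def)
  moreover have "(\<Sum>j<M. u' j * f_pt (\<lambda>k. if k = j then 1 else 0) i)
      = (\<Sum>j<M. u j * f_pt (\<lambda>k. if k = j then 1 else 0) i)"
    by (intro sum.cong) (auto simp: u'_def)
  ultimately show ?case
    using Suc.IH[of u'] by simp
qed

lemma f_pt_eq_pairing: "f_pt x i = pairing (row i) x"
proof -
  define M where "M = coord_bound i"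
  define low where "low j = (if j < M then x j else 0)" for j
  have "f_pt x i = f_pt low i + f_pt (\<lambda>j. x j - low j) i"
    using f_pt_add[of low "\<lambda>j. x j - low j"] by simp
  also have "f_pt (\<lambda>j. x j - low j) i = 0"
    by (rule f_pt_vanishes_beyond_coord_bound) (simp add: low_def M_def)
  also have "f_pt low i = (\<Sum>j<M. row i j * x j)"
    by (subst f_pt_supp_below[of _ M]) (auto simp: supp_below_def low_def row_def M_def intro: sum.cong)
  also have "\<dots> = pairing (row i) x"
    by (rule pairing_supp_below[symmetric]) (simp add: supp_below_def row_def M_def)
  finally show ?thesis by simp
qed

sublocale row_system row
proof
  show "fin_supp (row i)" for i
    unfolding fin_supp_def supp_below_def row_def by (intro exI[of _ "coord_bound i"]) auto
qed

text \<open>Meaningful only on the range of \<open>f_pt\<close>, where it is well defined by \<open>f_pt_eq_iff\<close>.\<close>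

definition image_coords :: "(nat \<Rightarrow> int) \<Rightarrow> nat \<Rightarrow> int" where
  "image_coords y = ann_coords (SOME x. f_pt x = y)"

definition image_iso :: "cantor set \<Rightarrow> (cantor \<Rightarrow> nat \<Rightarrow> int) \<Rightarrow> cantor \<Rightarrow> nat \<Rightarrow> int" where
  "image_iso S u = (\<lambda>p. if p \<in> S then image_coords (u p) else undefined)"

lemma f_pt_eq_iff: "f_pt x = f_pt y \<longleftrightarrow> ann_coords x = ann_coords y"
proof -
  define d where "d = (\<lambda>j. x j + (- 1) * y j)"
  have "f_pt d = (\<lambda>i. f_pt x i - f_pt y i)"
    using f_pt_add[of x "\<lambda>j. (- 1) * y j"] f_pt_smult[of "- 1" y] by (simp add: d_def)
  then have "f_pt x = f_pt y \<longleftrightarrow> d \<in> Ker"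
    by (auto simp: Ker_def f_pt_eq_pairing[symmetric] fun_eq_iff)
  also have "\<dots> \<longleftrightarrow> ann_coords x = ann_coords y"
    by (simp add: Ker_iff_ann_coords d_def ann_coords_diff fun_eq_iff)
  finally show ?thesis .
qed

lemma image_coords_f_pt: "image_coords (f_pt x) = ann_coords x"
proof -
  have "f_pt (SOME x'. f_pt x' = f_pt x) = f_pt x"
    by (rule someI[where x = x]) (rule refl)
  then show ?thesis
    unfolding image_coords_def by (simp add: f_pt_eq_iff)
qed

lemma cimage_cover:
  assumes "s \<in> cimage f S"
  shows "\<exists>n Ts gs. (\<forall>j<n. closed (Ts j) \<and> gs j \<in> cmap (Ts j) S \<and>
      (\<exists>l\<in>sec (Ts j). pull (Ts j) (gs j) s = f (Ts j) l)) \<and> S = (\<Union>j<(n::nat). gs j ` Ts j)"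
proof -
  obtain n :: nat and Ts gs where cover: "\<forall>j<n. light_profinite (Ts j) \<and> gs j \<in> cmap (Ts j) S"
    "S \<subseteq> (\<Union>j<n. gs j ` Ts j)" "\<forall>j<n. pull (Ts j) (gs j) s \<in> f (Ts j) ` sec (Ts j)"
    using assms unfolding cimage_def by blast
  have "(\<Union>j<n. gs j ` Ts j) \<subseteq> S"
    using cover(1) by (auto simp: cmap_def)
  then have "S = (\<Union>j<n. gs j ` Ts j)"
    using cover(2) by (rule antisym[rotated])
  moreover have "\<forall>j<n. closed (Ts j) \<and> gs j \<in> cmap (Ts j) S \<and> (\<exists>l\<in>sec (Ts j). pull (Ts j) (gs j) s = f (Ts j) l)"
    using cover(1,3) by (auto simp: light_profinite_def)
  ultimately show ?thesis by blast
qed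

lemma cimage_sec: "s \<in> cimage f S \<Longrightarrow> s \<in> sec S"
  by (simp add: cimage_def)

lemma cimage_values:
  assumes "s \<in> cimage f S" "p \<in> S"
  shows "\<exists>x. s p = f_pt x"
proof -
  obtain n :: nat and Ts gs where pieces: "\<forall>j<n. closed (Ts j) \<and> gs j \<in> cmap (Ts j) S \<and>
      (\<exists>l\<in>sec (Ts j). pull (Ts j) (gs j) s = f (Ts j) l)" and cover: "S = (\<Union>j<n. gs j ` Ts j)"
    using cimage_cover[OF assms(1)] by blast
  obtain j y where "j < n" "y \<in> Ts j" "p = gs j y"
    using assms(2) cover by blast
  from pieces \<open>j < n\<close> have "closed (Ts j)" and "\<exists>l\<in>sec (Ts j). pull (Ts j) (gs j) s = f (Ts j) l"
    by simp_all
  then obtain l where "l \<in> sec (Ts j)" and l: "pull (Ts j) (gs j) s = f (Ts j) l"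
    by blast
  have "s p = pull (Ts j) (gs j) s y"
    using \<open>y \<in> Ts j\<close> \<open>p = gs j y\<close> by (simp add: pull_def)
  also have "\<dots> = f_pt (l y)"
    using l f_pointwise[OF \<open>closed (Ts j)\<close> \<open>l \<in> sec (Ts j)\<close> \<open>y \<in> Ts j\<close>] by simp
  finally show ?thesis by blast
qed

text \<open>Continuity is checked on the finitely many compact pieces of the cover, through which
  the section factors.\<close>

lemma continuous_on_image_coords_cimage:
  assumes "s \<in> cimage f S"
  shows "continuous_on S (\<lambda>p. image_coords (s p))"
proof -
  obtain n :: nat and Ts gs where pieces: "\<forall>j<n. closed (Ts j) \<and> gs j \<in> cmap (Ts j) S \<and>
      (\<exists>l\<in>sec (Ts j). pull (Ts j) (gs j) s = f (Ts j) l)" and cover: "S = (\<Union>j<n. gs j ` Ts j)"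
    using cimage_cover[OF assms] by blast
  have piece: "continuous_on (gs j ` Ts j) (\<lambda>p. image_coords (s p))"
    and closed_piece: "closed (gs j ` Ts j)" if j: "j < n" for j
  proof -
    obtain l where "l \<in> sec (Ts j)" and l: "pull (Ts j) (gs j) s = f (Ts j) l"
      using pieces j by blast
    have "closed (Ts j)"
      using pieces j by blast
    then have compact: "compact (Ts j)"
      by (rule closed_imp_compact_fun_finite)
    have cont: "continuous_on (Ts j) (gs j)"
      using pieces j by (simp add: cmap_def)
    have "image_coords (s (gs j y)) = ann_coords (l y)" if "y \<in> Ts j" for y
      using fun_cong[OF l, of y] f_pointwise[OF \<open>closed (Ts j)\<close> \<open>l \<in> sec (Ts j)\<close> that] that
      by (simp add: pull_def image_coords_f_pt)
    moreover have "continuous_on (Ts j) (ann_coords \<circ> l)"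
      using \<open>l \<in> sec (Ts j)\<close> continuous_on_ann_coords by (intro continuous_on_compose) (simp_all add: sec_def)
    ultimately have "continuous_on (Ts j) ((\<lambda>p. image_coords (s p)) \<circ> gs j)"
      by (simp add: comp_def cong: continuous_on_cong)
    then show "continuous_on (gs j ` Ts j) (\<lambda>p. image_coords (s p))"
      using compact cont by (rule continuous_on_compact_image[rotated 2])
    show "closed (gs j ` Ts j)"
      using compact cont by (intro compact_imp_closed_fun compact_continuous_image)
  qed
  show ?thesis
    unfolding cover by (rule continuous_on_closed_Union) (simp_all add: piece closed_piece)
qed

lemma image_iso_sec:
  assumes "u \<in> cimage f S"
  shows "image_iso S u \<in> secI ann_support S"
proof -
  have "continuous_on S (image_iso S u)"
    using continuous_on_image_coords_cimage[OF assms] by (simp add: image_iso_def cong: continuous_on_cong)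
  moreover have "image_iso S u p a = 0" if "p \<in> S" "a \<notin> ann_support" for p a
    using cimage_values[OF assms that(1)] that by (auto simp: image_iso_def image_coords_f_pt ann_coords_outside)
  ultimately show ?thesis
    by (simp add: secI_def sec_def image_iso_def)
qed

lemma image_iso_inj: "inj_on (image_iso S) (cimage f S)"
proof (rule inj_onI, rule ext)
  fix u v p
  assume u: "u \<in> cimage f S" and v: "v \<in> cimage f S" and eq: "image_iso S u = image_iso S v"
  show "u p = v p"
  proof (cases "p \<in> S")
    case True
    obtain x y where "u p = f_pt x" "v p = f_pt y"
      using cimage_values[OF u True] cimage_values[OF v True] by blast
    moreover have "ann_coords x = ann_coords y"
      using fun_cong[OF eq, of p] True \<open>u p = f_pt x\<close> \<open>v p = f_pt y\<close>
      by (simp add: image_iso_def image_coords_f_pt)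
    ultimately show ?thesis
      by (simp add: f_pt_eq_iff)
  next
    case False
    then show ?thesis
      using cimage_sec[OF u] cimage_sec[OF v] by (simp add: sec_def)
  qed
qed

lemma f_sec_in_cimage:
  assumes "closed S" "l \<in> sec S"
  shows "f S l \<in> cimage f S"
proof -
  have "f S l \<in> sec S"
    using f_sec[OF assms] .
  moreover from this have "pull S id (f S l) = f S l"
    by (auto simp: pull_def sec_def fun_eq_iff)
  ultimately show ?thesis
    unfolding cimage_def using assms
    by (intro CollectI conjI exI[of _ "1::nat"] exI[of _ "\<lambda>_. S"] exI[of _ "\<lambda>_. id"])
      (auto simp: light_profinite_def cmap_def)
qed

lemma image_iso_surj:
  assumes "closed S" "t \<in> secI ann_support S"
  shows "t \<in> image_iso S ` cimage f S"
proof -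
  obtain \<sigma> where "continuous_on UNIV \<sigma>" and \<sigma>: "\<And>t. \<forall>a. a \<notin> ann_support \<longrightarrow> t a = 0 \<Longrightarrow> ann_coords (\<sigma> t) = t"
    using ann_coords_section by blast
  have t: "t \<in> sec S" "\<And>p a. p \<in> S \<Longrightarrow> a \<notin> ann_support \<Longrightarrow> t p a = 0"
    using assms(2) by (auto simp: secI_def)
  define l where "l p = (if p \<in> S then \<sigma> (t p) else undefined)" for p
  have "continuous_on S (\<sigma> \<circ> t)"
    using t(1) \<open>continuous_on UNIV \<sigma>\<close> by (intro continuous_on_compose) (auto simp: sec_def elim: continuous_on_subset)
  then have "l \<in> sec S"
    by (simp add: sec_def l_def cong: continuous_on_cong)
  moreover have "image_iso S (f S l) = t"
  proof
    fix p
    show "image_iso S (f S l) p = t p"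
      using f_pointwise[OF assms(1) \<open>l \<in> sec S\<close>] \<sigma>[of "t p"] t
      by (cases "p \<in> S") (auto simp: image_iso_def l_def image_coords_f_pt sec_def)
  qed
  ultimately show ?thesis
    using f_sec_in_cimage[OF assms(1)] by blast
qed

lemma image_iso_sadd:
  assumes "u \<in> cimage f S" "v \<in> cimage f S"
  shows "image_iso S (sadd S u v) = sadd S (image_iso S u) (image_iso S v)"
proof
  fix p
  show "image_iso S (sadd S u v) p = sadd S (image_iso S u) (image_iso S v) p"
  proof (cases "p \<in> S")
    case True
    obtain x y where "u p = f_pt x" "v p = f_pt y"
      using cimage_values[OF assms(1) True] cimage_values[OF assms(2) True] by blast
    then have "(\<lambda>i. u p i + v p i) = f_pt (\<lambda>j. x j + y j)"
      by (simp add: f_pt_add)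
    then show ?thesis
      using True \<open>u p = f_pt x\<close> \<open>v p = f_pt y\<close>
      by (simp add: image_iso_def sadd_def image_coords_f_pt ann_coords_add)
  next
    case False
    then show ?thesis by (simp add: image_iso_def sadd_def)
  qed
qed

lemma image_iso_pull:
  assumes "g \<in> cmap T S"
  shows "image_iso T (pull T g u) = pull T g (image_iso S u)"
  using assms by (auto simp: image_iso_def pull_def cmap_def fun_eq_iff)

theorem image_iso_prodZ_ann_support: "image_iso_prodZ f ann_support image_iso"
  unfolding image_iso_prodZ_def
proof (intro conjI allI impI ballI)
  fix S assume "light_profinite S"
  then show "bij_betw (image_iso S) (cimage f S) (secI ann_support S)"
    using image_iso_inj image_iso_sec image_iso_surj
    by (auto simp: bij_betw_def light_profinite_def)
qed (simp_all add: image_iso_sadd image_iso_pull)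

end

theorem lemma3p13:
  assumes "condensed_endo f"
  shows "\<exists>(I::nat set) \<phi>. image_iso_prodZ f I \<phi>"
proof -
  interpret condensed_endomorphism f
    using assms by unfold_locales
  show ?thesis
    using image_iso_prodZ_ann_support by blast
qed

end
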